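(* Let $G\in\mathbb C[x,y]\setminus\mathbb C$ and $K\in\mathbb C[s,t]\setminus\mathbb C$ be irreducible polynomials of degree at most $\delta$, let $F\in\mathbb C[x,y,s,t]\setminus\{0\}$ be a polynomial of degree $d$, and let $P\subset Z(G)$ and $Q\subset Z(K)$ be finite sets. Then \[|Z(F)\cap(P\times Q)|=O_{d,\delta}(|P|+|Q|),\] unless $F$ is $(G,K)$-Cartesian.
   Context: $F$ is $(G,K)$-Cartesian if $F=G(x,y)H(x,y,s,t)+K(s,t)L(x,y,s,t)$ for some $H,L\in\mathbb C[x,y,s,t]$. $P\times Q$ is viewed in $\mathbb C^4$ with coordinates $(x,y,s,t)$. The implied constant depends only on $d$ and $\delta$. *)

theory Defs
  imports "HOL-Computational_Algebra.Polynomial" "HOL-Computational_Algebra.Polynomial_Factorial" Complex_Main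
begin

text \<open>C[x,y] is complex poly poly (outer variable x, inner y);
  C[s,t] is complex poly poly (outer s, inner t);
  C[x,y,s,t] is complex poly poly poly poly (outermost x, then y, then s, innermost t).\<close>

type_synonym poly2 = "complex poly poly"
type_synonym poly4 = "complex poly poly poly poly"

definition eval2 :: "poly2 \<Rightarrow> complex \<Rightarrow> complex \<Rightarrow> complex" where
  "eval2 p a b = poly (map_poly (\<lambda>c. poly c b) p) a"

definition eval4 :: "poly4 \<Rightarrow> complex \<Rightarrow> complex \<Rightarrow> complex \<Rightarrow> complex \<Rightarrow> complex" where
  "eval4 p x y s t =
     poly (map_poly (\<lambda>c. poly (map_poly (\<lambda>d. poly (map_poly (\<lambda>e. poly e t) d) s) c) y) p) x"

definition tdeg2 :: "'a::zero poly poly \<Rightarrow> nat" where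
  "tdeg2 p = Max ({i + degree (coeff p i) | i. coeff p i \<noteq> 0} \<union> {0})"

definition tdeg3 :: "'a::zero poly poly poly \<Rightarrow> nat" where
  "tdeg3 p = Max ({i + tdeg2 (coeff p i) | i. coeff p i \<noteq> 0} \<union> {0})"

definition tdeg4 :: "'a::zero poly poly poly poly \<Rightarrow> nat" where
  "tdeg4 p = Max ({i + tdeg3 (coeff p i) | i. coeff p i \<noteq> 0} \<union> {0})"

definition Z2 :: "poly2 \<Rightarrow> (complex \<times> complex) set" where
  "Z2 p = {(a, b). eval2 p a b = 0}"

definition Z4 :: "poly4 \<Rightarrow> ((complex \<times> complex) \<times> (complex \<times> complex)) set" where
  "Z4 p = {((x, y), (s, t)). eval4 p x y s t = 0}"

definition embed_xy :: "poly2 \<Rightarrow> poly4" where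
  "embed_xy G = map_poly (map_poly (\<lambda>a. [:[:a:]:])) G"

definition embed_st :: "poly2 \<Rightarrow> poly4" where
  "embed_st K = [:[:K:]:]"

definition cartesian :: "poly2 \<Rightarrow> poly2 \<Rightarrow> poly4 \<Rightarrow> bool" where
  "cartesian G K F \<longleftrightarrow> (\<exists>H L. F = embed_xy G * H + embed_st K * L)"

end

theory Submission
  imports Defs
    "HOL-Computational_Algebra.Field_as_Ring"
    "HOL-Computational_Algebra.Fundamental_Theorem_Algebra"
    "Subresultants.Subresultant_Gcd"
begin

text \<open>If \<open>F\<close> is not \<open>(G, K)\<close>-Cartesian, then \<open>F\<close> does not vanish on all of
  \<open>Z(G) \<times> Z(K)\<close>: otherwise one could strip off, one at a time, the coefficients of \<open>F\<close>
  (as a polynomial in \<open>x, y\<close> over \<open>\<complex>[s, t]\<close>) that are not multiples of \<open>K\<close>, using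
  Study's lemma for \<open>G\<close> and \<open>K\<close>. So fix \<open>p\<^sub>0 \<in> Z(G)\<close>, \<open>q\<^sub>0 \<in> Z(K)\<close> with
  \<open>F(p\<^sub>0, q\<^sub>0) \<noteq> 0\<close>. For \<open>p \<in> P\<close>, either \<open>K\<close> does not divide \<open>F(p, \<cdot>)\<close>, and then
  a Bezout-type bound leaves \<open>O(1)\<close> points \<open>q \<in> Q\<close> with \<open>F(p, q) = 0\<close>; or it does, and
  then \<open>F(p, q\<^sub>0) = 0\<close>, so \<open>p\<close> is one of the \<open>O(1)\<close> common zeros of \<open>G\<close> and
  \<open>F(\<cdot>, q\<^sub>0)\<close>, the latter not being a multiple of \<open>G\<close>. Hence
  \<open>|Z(F) \<inter> (P \<times> Q)| \<le> O(|P|) + O(1) \<cdot> |Q|\<close>.\<close>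

lemma comm_ring_hom_poly_map_poly:
  assumes "comm_ring_hom h"
  shows "comm_ring_hom (\<lambda>p. poly (map_poly h p) a)"
proof -
  interpret h: comm_ring_hom h by (rule assms)
  interpret hh: map_poly_comm_ring_hom h ..
  show ?thesis by unfold_locales (auto simp: hh.hom_add hh.hom_mult)
qed

lemma comm_ring_hom_eval2: "comm_ring_hom (\<lambda>p. eval2 p a b)"
  unfolding eval2_def by (intro comm_ring_hom_poly_map_poly poly_hom.comm_ring_hom_axioms)

lemma eval4_eq_eval2:
  "eval4 p x y s t = poly (map_poly (\<lambda>c. poly (map_poly (\<lambda>d. eval2 d s t) c) y) p) x"
  by (simp add: eval4_def eval2_def)

lemma comm_ring_hom_eval4: "comm_ring_hom (\<lambda>p. eval4 p x y s t)"
  unfolding eval4_eq_eval2 by (intro comm_ring_hom_poly_map_poly comm_ring_hom_eval2)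

interpretation eval2: comm_ring_hom "\<lambda>p. eval2 p a b" for a b
  by (rule comm_ring_hom_eval2)

interpretation eval4: comm_ring_hom "\<lambda>p. eval4 p x y s t" for x y s t
  by (rule comm_ring_hom_eval4)

lemma eval2_eq_0_if_dvd: "K dvd c \<Longrightarrow> (a, b) \<in> Z2 K \<Longrightarrow> eval2 c a b = 0"
  by (auto simp: Z2_def eval2.hom_mult elim!: dvdE)

lemma map_poly_const_poly [simp]: "f 0 = 0 \<Longrightarrow> map_poly f [:c:] = [:f c:]"
  by (simp add: Polynomial.map_poly_pCons)

definition const4 :: "complex \<Rightarrow> poly4" where
  "const4 a = [:[:[:[:a:]:]:]:]"

lemma eval4_const4 [simp]: "eval4 (const4 a) x y s t = a"
  by (simp add: eval4_def const4_def)

lemma const4_mult: "const4 a * const4 b = const4 (a * b)"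
  by (simp add: const4_def)

lemma const4_1: "const4 1 = 1"
  by (simp add: const4_def)

lemma eval4_embed_st [simp]: "eval4 (embed_st c) x y s t = eval2 c s t"
  by (simp add: eval4_def embed_st_def eval2_def)

lemma eval4_embed_xy [simp]: "eval4 (embed_xy g) x y s t = eval2 g x y"
  by (simp add: eval4_eq_eval2 embed_xy_def eval2_def map_poly_map_poly o_def)

lemma embed_xy_mult: "embed_xy (p * q) = embed_xy p * embed_xy q"
proof -
  interpret const: comm_ring_hom "\<lambda>a::complex. [:[:a:]:]" by unfold_locales auto
  interpret inner: map_poly_comm_ring_hom "\<lambda>a::complex. [:[:a:]:]" ..
  interpret outer: map_poly_comm_ring_hom "map_poly (\<lambda>a::complex. [:[:a:]:])" ..
  show ?thesis unfolding embed_xy_def by (rule outer.hom_mult)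
qed

definition partial_eval_st :: "poly4 \<Rightarrow> complex \<Rightarrow> complex \<Rightarrow> poly2" where
  "partial_eval_st F s t = map_poly (map_poly (\<lambda>c. eval2 c s t)) F"

definition partial_eval_xy :: "poly4 \<Rightarrow> complex \<Rightarrow> complex \<Rightarrow> poly2" where
  "partial_eval_xy F a b = poly (map_poly (\<lambda>c. poly c [:[:b:]:]) F) [:[:a:]:]"

lemma eval2_partial_eval_st: "eval2 (partial_eval_st F s t) x y = eval4 F x y s t"
  by (simp add: partial_eval_st_def eval4_eq_eval2 eval2_def[of _ x y] map_poly_map_poly o_def)

lemma eval2_partial_eval_xy: "eval2 (partial_eval_xy F a b) s t = eval4 F a b s t"
proof -
  have const: "eval2 [:[:c:]:] s t = c" for c by (simp add: eval2_def)
  have inner: "eval2 (poly c [:[:b:]:]) s t = poly (map_poly (\<lambda>d. eval2 d s t) c) b" for c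
    using eval2.poly_map_poly[where a = s and b = t and p = c and x = "[:[:b:]:]"] by (simp add: const)
  show ?thesis
    unfolding partial_eval_xy_def eval4_eq_eval2 eval2.poly_map_poly[symmetric]
    by (simp add: const inner map_poly_map_poly o_def)
qed

definition partial_degrees_le2 :: "nat \<Rightarrow> 'a::zero poly poly \<Rightarrow> bool" where
  "partial_degrees_le2 D p \<longleftrightarrow> degree p \<le> D \<and> (\<forall>i. degree (coeff p i) \<le> D)"

definition partial_degrees_le4 :: "nat \<Rightarrow> 'a::zero poly poly poly poly \<Rightarrow> bool" where
  "partial_degrees_le4 D F \<longleftrightarrow> degree F \<le> D \<and> (\<forall>i. degree (coeff F i) \<le> D) \<and>
     (\<forall>i j. partial_degrees_le2 D (coeff (coeff F i) j))"

lemma partial_degrees_le2_mono: "partial_degrees_le2 D p \<Longrightarrow> D \<le> D' \<Longrightarrow> partial_degrees_le2 D' p"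
  unfolding partial_degrees_le2_def by (meson le_trans)

lemma partial_degrees_le4_mono: "partial_degrees_le4 D F \<Longrightarrow> D \<le> D' \<Longrightarrow> partial_degrees_le4 D' F"
  unfolding partial_degrees_le4_def using partial_degrees_le2_mono by (meson le_trans)

lemma coeff_weight_le_Max:
  fixes p :: "'a::zero poly"
  assumes "coeff p i \<noteq> 0"
  shows "i + f (coeff p i) \<le> Max ({i + f (coeff p i) | i. coeff p i \<noteq> 0} \<union> {0})"
proof -
  have "finite {i. coeff p i \<noteq> 0}"
    by (rule finite_subset[of _ "{..degree p}"]) (auto intro: le_degree)
  then have "finite ({i + f (coeff p i) | i. coeff p i \<noteq> 0} \<union> {0})"
    by (simp add: setcompr_eq_image)
  then show ?thesis by (rule Max_ge) (use assms in auto)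
qed

lemma degree_le_Max_coeff_weight:
  fixes p :: "'a::zero poly"
  shows "degree p \<le> Max ({i + f (coeff p i) | i. coeff p i \<noteq> 0} \<union> {0})"
  using coeff_weight_le_Max[of p "degree p" f] by (cases "p = 0") auto

lemma partial_degrees_le2_tdeg2: "partial_degrees_le2 (tdeg2 p) p"
  unfolding partial_degrees_le2_def
proof (intro conjI allI)
  show "degree p \<le> tdeg2 p" unfolding tdeg2_def by (rule degree_le_Max_coeff_weight)
  show "degree (coeff p i) \<le> tdeg2 p" for i
    using coeff_weight_le_Max[of p i degree]
    by (cases "coeff p i = 0") (auto simp: tdeg2_def)
qed

lemma partial_degrees_le4_tdeg4: "partial_degrees_le4 (tdeg4 F) F"
  unfolding partial_degrees_le4_def
proof (intro conjI allI)
  show "degree F \<le> tdeg4 F" unfolding tdeg4_def by (rule degree_le_Max_coeff_weight)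
  fix i
  have tdeg3: "tdeg3 (coeff F i) \<le> tdeg4 F"
    using coeff_weight_le_Max[of F i tdeg3]
    by (cases "coeff F i = 0") (auto simp: tdeg3_def tdeg4_def)
  then show "degree (coeff F i) \<le> tdeg4 F"
    using degree_le_Max_coeff_weight[of "coeff F i" tdeg2] unfolding tdeg3_def by linarith
  fix j
  have "tdeg2 (coeff (coeff F i) j) \<le> tdeg3 (coeff F i)"
    using coeff_weight_le_Max[of "coeff F i" j tdeg2]
    by (cases "coeff (coeff F i) j = 0") (auto simp: tdeg2_def tdeg3_def)
  then show "partial_degrees_le2 (tdeg4 F) (coeff (coeff F i) j)"
    using tdeg3 partial_degrees_le2_tdeg2 partial_degrees_le2_mono by (meson le_trans)
qed

lemma partial_degrees_le2_sum:
  fixes f :: "'b \<Rightarrow> 'a::comm_monoid_add poly poly"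
  shows "(\<And>i. i \<in> A \<Longrightarrow> partial_degrees_le2 D (f i)) \<Longrightarrow> partial_degrees_le2 D (\<Sum>i\<in>A. f i)"
proof (induction A rule: infinite_finite_induct)
  case (insert i A)
  then show ?case
    by (auto simp: partial_degrees_le2_def degree_add_le)
qed (simp_all add: partial_degrees_le2_def)

lemma partial_degrees_le2_smult_const:
  fixes p :: "'a::comm_semiring_1 poly poly"
  assumes "partial_degrees_le2 D p"
  shows "partial_degrees_le2 D (Polynomial.smult [:c:] p)"
  using assms unfolding partial_degrees_le2_def
  by (auto intro: order_trans[OF degree_smult_le])

lemma partial_degrees_le2_partial_eval_st:
  "partial_degrees_le4 D F \<Longrightarrow> partial_degrees_le2 D (partial_eval_st F s t)"
  unfolding partial_degrees_le2_def partial_degrees_le4_def partial_eval_st_def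
  by (auto simp: coeff_map_poly intro: order_trans[OF degree_map_poly_le])

lemma partial_degrees_le2_partial_eval_xy:
  assumes "partial_degrees_le4 D F"
  shows "partial_degrees_le2 D (partial_eval_xy F a b)"
proof -
  have "poly (coeff F i) [:[:b:]:] = (\<Sum>j\<le>degree (coeff F i). coeff (coeff F i) j * [:[:b ^ j:]:])" for i
    by (simp add: poly_altdef poly_const_pow)
  then have inner: "partial_degrees_le2 D (poly (coeff F i) [:[:b:]:])" for i
    using assms unfolding partial_degrees_le4_def
    by (auto intro!: partial_degrees_le2_sum partial_degrees_le2_smult_const)
  have "partial_eval_xy F a b = (\<Sum>i\<le>degree (map_poly (\<lambda>c. poly c [:[:b:]:]) F).
      Polynomial.smult [:a ^ i:] (poly (coeff F i) [:[:b:]:]))"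
    by (simp add: partial_eval_xy_def poly_altdef poly_const_pow coeff_map_poly mult.commute)
  then show ?thesis
    using inner by (auto intro!: partial_degrees_le2_sum partial_degrees_le2_smult_const)
qed

lemma degree_resultant_le:
  fixes K H :: "'a::comm_ring_1 poly poly"
  assumes "\<And>i. degree (coeff K i) \<le> D" and "\<And>i. degree (coeff H i) \<le> D"
  shows "degree (resultant K H) \<le> (degree K + degree H) * D"
proof -
  let ?A = "sylvester_mat K H"
  let ?n = "degree K + degree H"
  have entry: "degree (?A $$ (i, j)) \<le> D" if "i < ?n" "j < ?n" for i j
    using assms that by (auto simp: sylvester_index_mat)
  have "degree (det ?A) \<le> ?n * D"
    unfolding det_def
  proof (simp, rule degree_sum_le)
    show "finite {p. p permutes {0..<?n}}" by (rule finite_permutations) simp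
  next
    fix p assume "p \<in> {p. p permutes {0..<?n}}"
    then have p: "p i < ?n" if "i < ?n" for i
      using that by (auto simp: permutes_in_image)
    have "degree (of_int (sign p) * (\<Prod>i = 0..<?n. ?A $$ (i, p i)))
        \<le> degree (\<Prod>i = 0..<?n. ?A $$ (i, p i))"
      using degree_mult_le[of "of_int (sign p)" "\<Prod>i = 0..<?n. ?A $$ (i, p i)"] by simp
    also have "\<dots> \<le> (\<Sum>i = 0..<?n. degree (?A $$ (i, p i)))"
      using degree_prod_sum_le[of "{0..<?n}" "\<lambda>i. ?A $$ (i, p i)"] by (simp add: o_def)
    also have "\<dots> \<le> (\<Sum>i = 0..<?n. D)"
      by (rule sum_mono) (simp add: entry p)
    finally show "degree (of_int (sign p) * (\<Prod>i = 0..<?n. ?A $$ (i, p i))) \<le> ?n * D"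
      by simp
  qed
  then show ?thesis unfolding resultant_def .
qed

lemma linear_dvd_if_restriction_eq_0:
  fixes K :: poly2
  assumes "map_poly (\<lambda>c. poly c b) K = 0"
  shows "[:[:-b, 1:]:] dvd K"
proof -
  have "poly (coeff K i) b = 0" for i
    using arg_cong[OF assms, of "\<lambda>p. coeff p i"] by (simp add: coeff_map_poly)
  then show ?thesis by (simp add: const_poly_dvd_iff poly_eq_0_iff_dvd)
qed

lemma not_is_unit_linear: "\<not> is_unit ([:[:-b, 1:]:] :: poly2)"
  by (simp add: is_unit_const_poly_iff is_unit_iff_degree)

lemma degree_gcd_eq_0_if_irreducible:
  fixes K H :: poly2
  assumes "irreducible K" and "\<not> K dvd H"
  shows "degree (gcd K H) = 0"
proof -
  have "\<not> K dvd gcd K H"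
    using assms(2) dvd_trans gcd_dvd2 by blast
  then have "is_unit (gcd K H)"
    using irreducibleD'[OF assms(1) gcd_dvd1] by blast
  then show ?thesis by (auto simp: is_unit_poly_iff)
qed

lemma common_zero_is_root_resultant:
  fixes K H :: poly2
  assumes "(a, b) \<in> Z2 K \<inter> Z2 H"
  shows "poly (resultant K H * lead_coeff K * lead_coeff H) b = 0"
proof (cases "poly (lead_coeff K) b = 0 \<or> poly (lead_coeff H) b = 0")
  case False
  let ?r = "map_poly (\<lambda>c. poly c b)"
  have degK: "degree (?r K) = degree K" and degH: "degree (?r H) = degree H"
    using False by (auto intro!: degree_map_poly)
  have "coeff (?r K) (degree K) \<noteq> 0"
    using False by (simp add: coeff_map_poly)
  then have "?r K \<noteq> 0"
    by (rule contrapos_nn) simp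
  moreover have "[:-a, 1:] dvd gcd (?r K) (?r H)"
    using assms by (simp add: Z2_def eval2_def poly_eq_0_iff_dvd)
  ultimately have "degree [:-a, 1:] \<le> degree (gcd (?r K) (?r H))"
    by (intro dvd_imp_degree_le) simp_all
  then have "degree (gcd (?r K) (?r H)) \<noteq> 0"
    by simp
  then have "resultant (?r K) (?r H) = 0"
    by (simp add: resultant_0_gcd)
  moreover have "resultant (?r K) (?r H) = poly (resultant K H) b"
    using poly_hom.resultant_map_poly degK degH by blast
  ultimately show ?thesis by simp
qed auto

lemma common_zeros_on_line:
  fixes K H :: poly2
  assumes "irreducible K" "\<not> K dvd H" "degree K \<le> D" "degree H \<le> D"
  shows "finite {a. (a, b) \<in> Z2 K \<inter> Z2 H}" and "card {a. (a, b) \<in> Z2 K \<inter> Z2 H} \<le> D"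
proof -
  let ?r = "map_poly (\<lambda>c. poly c b)"
  obtain P where P: "P \<in> {K, H}" "?r P \<noteq> 0"
  proof (rule ccontr)
    assume "\<not> thesis"
    then have "[:[:-b, 1:]:] dvd K" "[:[:-b, 1:]:] dvd H"
      using that linear_dvd_if_restriction_eq_0 by blast+
    then show False
      using assms(1,2) irreducibleD' not_is_unit_linear dvd_trans by metis
  qed
  have sub: "{a. (a, b) \<in> Z2 K \<inter> Z2 H} \<subseteq> {a. poly (?r P) a = 0}"
    using P(1) by (auto simp: Z2_def eval2_def)
  have "degree P \<le> D"
    using P(1) assms(3,4) by auto
  then have "card {a. poly (?r P) a = 0} \<le> D"
    using card_poly_roots_bound[OF P(2)] degree_map_poly_le[of "\<lambda>c. poly c b" P] by linarith
  then show "finite {a. (a, b) \<in> Z2 K \<inter> Z2 H}" "card {a. (a, b) \<in> Z2 K \<inter> Z2 H} \<le> D"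
    using sub poly_roots_finite[OF P(2)] by (meson card_mono finite_subset le_trans)+
qed

definition bezout_bound :: "nat \<Rightarrow> nat" where
  "bezout_bound D = (2 * D * D + 2 * D) * D"

text \<open>The common zeros lie on the lines \<open>y = b\<close> through the roots \<open>b\<close> of
  \<open>Res\<^sub>x(K, H) \<cdot> lc K \<cdot> lc H\<close>, and each such line carries at most \<open>D\<close> of them.\<close>

lemma common_zeros_bound:
  fixes K H :: poly2
  assumes irr: "irreducible K" and not_dvd: "\<not> K dvd H"
    and degK: "partial_degrees_le2 D K" and degH: "partial_degrees_le2 D H"
  shows "finite (Z2 K \<inter> Z2 H)" and "card (Z2 K \<inter> Z2 H) \<le> bezout_bound D"
proof -
  define R where "R = resultant K H * lead_coeff K * lead_coeff H"
  have "K \<noteq> 0" "H \<noteq> 0" "resultant K H \<noteq> 0"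
    using irr not_dvd degree_gcd_eq_0_if_irreducible[OF irr not_dvd]
    by (auto simp: resultant_0_gcd)
  then have R: "R \<noteq> 0" by (simp add: R_def)
  have "degree (resultant K H) \<le> (D + D) * D"
    using degree_resultant_le[of K D H] degK degH unfolding partial_degrees_le2_def
    by (meson add_mono le_trans mult_le_mono1)
  moreover have "degree (lead_coeff K) \<le> D" "degree (lead_coeff H) \<le> D"
    using degK degH by (auto simp: partial_degrees_le2_def)
  ultimately have "degree R \<le> 2 * D * D + 2 * D"
    using degree_mult_le[of "resultant K H * lead_coeff K" "lead_coeff H"]
      degree_mult_le[of "resultant K H" "lead_coeff K"]
    unfolding R_def by (simp add: algebra_simps)
  then have card_roots: "card {b. poly R b = 0} \<le> 2 * D * D + 2 * D"
    using card_poly_roots_bound[OF R] by linarith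
  define line where "line b = {a. (a, b) \<in> Z2 K \<inter> Z2 H}" for b
  have line: "finite (line b)" "card (line b) \<le> D" for b
    using common_zeros_on_line[OF irr not_dvd] degK degH
    by (auto simp: line_def partial_degrees_le2_def)
  have cover: "Z2 K \<inter> Z2 H \<subseteq> (\<Union>b\<in>{b. poly R b = 0}. (\<lambda>a. (a, b)) ` line b)"
    using common_zero_is_root_resultant by (fastforce simp: R_def line_def)
  moreover have fin: "finite (\<Union>b\<in>{b. poly R b = 0}. (\<lambda>a. (a, b)) ` line b)"
    using poly_roots_finite[OF R] line by blast
  ultimately show "finite (Z2 K \<inter> Z2 H)"
    by (rule finite_subset)
  have "card (\<Union>b\<in>{b. poly R b = 0}. (\<lambda>a. (a, b)) ` line b)
      \<le> (\<Sum>b\<in>{b. poly R b = 0}. card ((\<lambda>a. (a, b)) ` line b))"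
    by (rule card_UN_le[OF poly_roots_finite[OF R]])
  also have "\<dots> \<le> (\<Sum>b\<in>{b. poly R b = 0}. D)"
    by (rule sum_mono) (meson card_image_le line le_trans)
  also have "\<dots> \<le> bezout_bound D"
    using card_roots by (simp add: bezout_bound_def)
  finally show "card (Z2 K \<inter> Z2 H) \<le> bezout_bound D"
    using cover fin by (meson card_mono le_trans)
qed

lemma infinite_Z2:
  fixes K :: poly2
  assumes "K \<noteq> 0" and "\<not> is_unit K"
  shows "infinite (Z2 K)"
proof (cases "degree K = 0")
  case True
  then obtain k where K: "K = [:k:]" by (metis degree_0_id)
  with assms have "degree k \<noteq> 0"
    by (auto simp: is_unit_const_poly_iff is_unit_iff_degree)
  then obtain b where "poly k b = 0"
    using fundamental_theorem_of_algebra constant_degree by metis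
  then have "UNIV \<times> {b} \<subseteq> Z2 K"
    by (auto simp: Z2_def eval2_def K)
  moreover have "infinite (UNIV \<times> {b} :: (complex \<times> complex) set)"
    using finite_cartesian_productD1 infinite_UNIV_char_0 by blast
  ultimately show ?thesis
    using finite_subset by blast
next
  case False
  have "{b. poly (lead_coeff K) b \<noteq> 0} = UNIV - {b. poly (lead_coeff K) b = 0}"
    by auto
  then have "infinite {b. poly (lead_coeff K) b \<noteq> 0}"
    using Diff_infinite_finite poly_roots_finite assms(1) infinite_UNIV_char_0
    by (metis leading_coeff_0_iff)
  moreover have "{b. poly (lead_coeff K) b \<noteq> 0} \<subseteq> snd ` Z2 K"
  proof
    fix b assume "b \<in> {b. poly (lead_coeff K) b \<noteq> 0}"
    then have "degree (map_poly (\<lambda>c. poly c b) K) = degree K"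
      by (intro degree_map_poly) auto
    then obtain a where "poly (map_poly (\<lambda>c. poly c b) K) a = 0"
      using fundamental_theorem_of_algebra constant_degree False by metis
    then have "(a, b) \<in> Z2 K" by (simp add: Z2_def eval2_def)
    then show "b \<in> snd ` Z2 K" by force
  qed
  ultimately show ?thesis
    using finite_subset by blast
qed

lemma dvd_if_Z2_subset:
  fixes K c :: poly2
  assumes irr: "irreducible K" and sub: "Z2 K \<subseteq> Z2 c"
  shows "K dvd c"
proof (rule ccontr)
  assume not_dvd: "\<not> K dvd c"
  define D where "D = max (tdeg2 K) (tdeg2 c)"
  have "partial_degrees_le2 D K" "partial_degrees_le2 D c"
    using partial_degrees_le2_tdeg2 partial_degrees_le2_mono max.cobounded1 max.cobounded2
    unfolding D_def by metis+
  then have "finite (Z2 K \<inter> Z2 c)"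
    by (rule common_zeros_bound(1)[OF irr not_dvd])
  moreover have "Z2 K \<inter> Z2 c = Z2 K"
    using sub by blast
  moreover have "infinite (Z2 K)"
    using irr by (intro infinite_Z2) (auto simp: irreducible_def)
  ultimately show False
    by simp
qed

text \<open>\<open>coeff (coeff F i) j \<in> \<complex>[s, t]\<close> is the coefficient of \<open>x\<^sup>i y\<^sup>j\<close> in \<open>F\<close>.\<close>

definition non_multiple_coeffs :: "poly2 \<Rightarrow> poly4 \<Rightarrow> (nat \<times> nat) set" where
  "non_multiple_coeffs K F = {(i, j). \<not> K dvd coeff (coeff F i) j}"

lemma finite_non_multiple_coeffs: "finite (non_multiple_coeffs K F)"
proof (rule finite_subset)
  show "non_multiple_coeffs K F \<subseteq> (SIGMA i:{..degree F}. {..degree (coeff F i)})"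
    by (auto simp: non_multiple_coeffs_def intro: le_degree)
qed auto

lemma embed_st_dvd_if_no_non_multiple_coeffs:
  assumes "non_multiple_coeffs K F = {}"
  shows "embed_st K dvd F"
proof
  have "K dvd coeff (coeff F i) j" for i j
    using assms by (auto simp: non_multiple_coeffs_def)
  then show "F = embed_st K * map_poly (map_poly (\<lambda>c. c div K)) F"
    by (intro poly_eqI) (simp add: embed_st_def coeff_map_poly)
qed

lemma cartesian_if_cartesian_scaled:
  assumes "\<alpha> \<noteq> 0" and "cartesian G K (const4 \<alpha> * F - embed_xy G * H)"
  shows "cartesian G K F"
proof -
  obtain H' L' where "const4 \<alpha> * F - embed_xy G * H = embed_xy G * H' + embed_st K * L'"
    using assms(2) by (auto simp: cartesian_def)
  then have "const4 \<alpha> * F = embed_xy G * (H' + H) + embed_st K * L'"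
    by (simp add: algebra_simps)
  then have "const4 (1 / \<alpha>) * (const4 \<alpha> * F)
      = embed_xy G * (const4 (1 / \<alpha>) * (H' + H)) + embed_st K * (const4 (1 / \<alpha>) * L')"
    by (simp add: algebra_simps)
  moreover have "const4 (1 / \<alpha>) * (const4 \<alpha> * F) = F"
    using assms(1) by (simp add: mult.assoc[symmetric] const4_mult const4_1)
  ultimately show ?thesis
    unfolding cartesian_def by metis
qed

text \<open>Subtracting \<open>F(x, y, s\<^sub>0, t\<^sub>0) \<cdot> c\<^sub>0(s, t)\<close> from \<open>c\<^sub>0(s\<^sub>0, t\<^sub>0) \<cdot> F\<close>
  kills the coefficient \<open>c\<^sub>0\<close> of \<open>x\<^bsup>i\<^sub>0\<^esup> y\<^bsup>j\<^sub>0\<^esup>\<close> and changes coefficients divisible by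
  \<open>K\<close> only by a scalar factor, since these vanish at \<open>(s\<^sub>0, t\<^sub>0) \<in> Z(K)\<close>.\<close>

lemma non_multiple_coeffs_elimination:
  assumes "(s\<^sub>0, t\<^sub>0) \<in> Z2 K" and "c\<^sub>0 = coeff (coeff F i\<^sub>0) j\<^sub>0" and "\<alpha> = eval2 c\<^sub>0 s\<^sub>0 t\<^sub>0"
  shows "non_multiple_coeffs K (const4 \<alpha> * F - embed_xy (partial_eval_st F s\<^sub>0 t\<^sub>0) * embed_st c\<^sub>0)
    \<subseteq> non_multiple_coeffs K F - {(i\<^sub>0, j\<^sub>0)}"
    (is "non_multiple_coeffs K ?F' \<subseteq> _")
proof -
  have coeff_F': "coeff (coeff ?F' i) j
      = [:[:\<alpha>:]:] * coeff (coeff F i) j - c\<^sub>0 * [:[:eval2 (coeff (coeff F i) j) s\<^sub>0 t\<^sub>0:]:]" for i j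
    by (simp add: const4_def embed_xy_def embed_st_def partial_eval_st_def coeff_map_poly)
  have "K dvd coeff (coeff ?F' i\<^sub>0) j\<^sub>0"
    unfolding coeff_F' by (simp add: assms(2,3) mult.commute)
  moreover have "K dvd coeff (coeff ?F' i) j" if "K dvd coeff (coeff F i) j" for i j
  proof -
    have "eval2 (coeff (coeff F i) j) s\<^sub>0 t\<^sub>0 = 0"
      using that assms(1) by (rule eval2_eq_0_if_dvd)
    then show ?thesis
      unfolding coeff_F' using that by (simp add: dvd_smult)
  qed
  ultimately show ?thesis
    by (auto simp: non_multiple_coeffs_def)
qed

lemma Z2_subset_partial_eval_st:
  assumes "Z2 G \<times> Z2 K \<subseteq> Z4 F" and "(s, t) \<in> Z2 K"
  shows "Z2 G \<subseteq> Z2 (partial_eval_st F s t)"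
proof
  fix p assume "p \<in> Z2 G"
  then have "(p, (s, t)) \<in> Z4 F" using assms by blast
  then show "p \<in> Z2 (partial_eval_st F s t)"
    by (cases p) (simp add: Z2_def Z4_def eval2_partial_eval_st)
qed

lemma cartesian_if_vanishes_on_product:
  assumes irrG: "irreducible G" and irrK: "irreducible K" and "Z2 G \<times> Z2 K \<subseteq> Z4 F"
  shows "cartesian G K F"
  using assms(3)
proof (induction "card (non_multiple_coeffs K F)" arbitrary: F rule: less_induct)
  case less
  show ?case
  proof (cases "non_multiple_coeffs K F = {}")
    case True
    then obtain L where "F = embed_st K * L"
      using embed_st_dvd_if_no_non_multiple_coeffs by blast
    then have "F = embed_xy G * 0 + embed_st K * L" by simp
    then show ?thesis unfolding cartesian_def by blast
  next
    case False
    then obtain i\<^sub>0 j\<^sub>0 where ij\<^sub>0: "(i\<^sub>0, j\<^sub>0) \<in> non_multiple_coeffs K F" by auto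
    define c\<^sub>0 where "c\<^sub>0 = coeff (coeff F i\<^sub>0) j\<^sub>0"
    have "\<not> Z2 K \<subseteq> Z2 c\<^sub>0"
      using dvd_if_Z2_subset[OF irrK] ij\<^sub>0 by (auto simp: non_multiple_coeffs_def c\<^sub>0_def)
    then obtain s\<^sub>0 t\<^sub>0 where st\<^sub>0: "(s\<^sub>0, t\<^sub>0) \<in> Z2 K" and "eval2 c\<^sub>0 s\<^sub>0 t\<^sub>0 \<noteq> 0"
      by (auto simp: Z2_def)
    define \<alpha> where "\<alpha> = eval2 c\<^sub>0 s\<^sub>0 t\<^sub>0"
    with \<open>eval2 c\<^sub>0 s\<^sub>0 t\<^sub>0 \<noteq> 0\<close> have "\<alpha> \<noteq> 0" by simp
    have "G dvd partial_eval_st F s\<^sub>0 t\<^sub>0"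
      using dvd_if_Z2_subset[OF irrG Z2_subset_partial_eval_st[OF less.prems st\<^sub>0]] .
    then obtain h where h: "partial_eval_st F s\<^sub>0 t\<^sub>0 = G * h" ..
    define F' where "F' = const4 \<alpha> * F - embed_xy (partial_eval_st F s\<^sub>0 t\<^sub>0) * embed_st c\<^sub>0"
    have "Z2 G \<times> Z2 K \<subseteq> Z4 F'"
      using less.prems eval2_eq_0_if_dvd[OF \<open>G dvd _\<close>]
      by (fastforce simp: Z4_def F'_def eval4.hom_minus eval4.hom_mult)
    moreover have "card (non_multiple_coeffs K F') < card (non_multiple_coeffs K F)"
      using non_multiple_coeffs_elimination[OF st\<^sub>0 c\<^sub>0_def \<alpha>_def] ij\<^sub>0
      by (intro psubset_card_mono finite_non_multiple_coeffs) (auto simp: F'_def)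
    ultimately have "cartesian G K F'"
      using less.hyps by blast
    then show ?thesis
      using cartesian_if_cartesian_scaled[of \<alpha> G K F "embed_xy h * embed_st c\<^sub>0"] \<open>\<alpha> \<noteq> 0\<close>
      by (simp add: F'_def h embed_xy_mult mult.assoc)
  qed
qed

lemma card_Sigma_le_with_exceptions:
  assumes "finite P" and "finite Q" and "\<And>p. p \<in> P \<Longrightarrow> S p \<subseteq> Q"
    and "\<And>p. p \<in> P \<Longrightarrow> p \<notin> E \<Longrightarrow> card (S p) \<le> B" and "card (P \<inter> E) \<le> B"
  shows "card (Sigma P S) \<le> B * (card P + card Q)"
proof -
  have "card (Sigma P S) = (\<Sum>p\<in>P. card (S p))"
    using assms(1-3) by (intro card_SigmaI) (auto intro: finite_subset)
  also have "\<dots> \<le> (\<Sum>p\<in>P. B + (if p \<in> E then card Q else 0))"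
    using assms(2-4) by (intro sum_mono) (auto intro: card_mono trans_le_add2)
  also have "\<dots> = card P * B + card (P \<inter> E) * card Q"
    using assms(1) by (simp add: sum.distrib sum.If_cases)
  also have "\<dots> \<le> B * (card P + card Q)"
    using assms(5) by (simp add: algebra_simps)
  finally show ?thesis .
qed

lemma card_zeros_on_fibre_le:
  assumes irrK: "irreducible K" and degK: "partial_degrees_le2 D K"
    and degF: "partial_degrees_le4 D F" and QK: "Q \<subseteq> Z2 K"
    and "(s\<^sub>0, t\<^sub>0) \<in> Z2 K" and "eval4 F a b s\<^sub>0 t\<^sub>0 \<noteq> 0"
  shows "card {q \<in> Q. ((a, b), q) \<in> Z4 F} \<le> bezout_bound D"
proof -
  have "\<not> K dvd partial_eval_xy F a b"
    using assms(5,6) eval2_eq_0_if_dvd eval2_partial_eval_xy by metis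
  note bound = common_zeros_bound[OF irrK this degK partial_degrees_le2_partial_eval_xy[OF degF]]
  have "{q \<in> Q. ((a, b), q) \<in> Z4 F} \<subseteq> Z2 K \<inter> Z2 (partial_eval_xy F a b)"
    using QK by (auto simp: Z2_def Z4_def eval2_partial_eval_xy)
  then show ?thesis
    using bound by (meson card_mono le_trans)
qed

lemma card_zeros_on_grid_le:
  assumes irrG: "irreducible G" and irrK: "irreducible K"
    and degG: "partial_degrees_le2 D G" and degK: "partial_degrees_le2 D K"
    and degF: "partial_degrees_le4 D F"
    and "finite P" and "finite Q" and PG: "P \<subseteq> Z2 G" and QK: "Q \<subseteq> Z2 K"
    and "\<not> cartesian G K F"
  shows "card (Z4 F \<inter> (P \<times> Q)) \<le> bezout_bound D * (card P + card Q)"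
proof -
  obtain p\<^sub>0 s\<^sub>0 t\<^sub>0 where p\<^sub>0: "p\<^sub>0 \<in> Z2 G" and st\<^sub>0: "(s\<^sub>0, t\<^sub>0) \<in> Z2 K"
    and "(p\<^sub>0, (s\<^sub>0, t\<^sub>0)) \<notin> Z4 F"
    using cartesian_if_vanishes_on_product[OF irrG irrK] \<open>\<not> cartesian G K F\<close> by fast
  then have "\<not> Z2 G \<subseteq> Z2 (partial_eval_st F s\<^sub>0 t\<^sub>0)"
    by (cases p\<^sub>0) (auto simp: Z2_def Z4_def eval2_partial_eval_st)
  then have "\<not> G dvd partial_eval_st F s\<^sub>0 t\<^sub>0"
    using eval2_eq_0_if_dvd by (auto simp: Z2_def)
  define E where "E = Z2 G \<inter> Z2 (partial_eval_st F s\<^sub>0 t\<^sub>0)"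
  note E_bound = common_zeros_bound[OF irrG \<open>\<not> G dvd _\<close> degG
      partial_degrees_le2_partial_eval_st[OF degF], folded E_def]
  have "Z4 F \<inter> (P \<times> Q) = Sigma P (\<lambda>p. {q \<in> Q. (p, q) \<in> Z4 F})"
    by auto
  also have "card \<dots> \<le> bezout_bound D * (card P + card Q)"
  proof (rule card_Sigma_le_with_exceptions)
    fix p assume "p \<in> P" "p \<notin> E"
    then show "card {q \<in> Q. (p, q) \<in> Z4 F} \<le> bezout_bound D"
      using card_zeros_on_fibre_le[OF irrK degK degF QK st\<^sub>0] PG
      by (cases p) (auto simp: E_def Z2_def eval2_partial_eval_st)
  next
    show "card (P \<inter> E) \<le> bezout_bound D"
      using E_bound by (meson card_mono inf_le2 le_trans)
  qed (use \<open>finite P\<close> \<open>finite Q\<close> in auto)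
  finally show ?thesis .
qed

theorem lemma3p1:
  "\<forall>d \<delta> :: nat. \<exists>C :: real. \<forall>(G :: poly2) (K :: poly2) (F :: poly4) P Q.
     irreducible G \<and> tdeg2 G \<ge> 1 \<and> tdeg2 G \<le> \<delta> \<and>
     irreducible K \<and> tdeg2 K \<ge> 1 \<and> tdeg2 K \<le> \<delta> \<and>
     F \<noteq> 0 \<and> tdeg4 F = d \<and>
     finite P \<and> finite Q \<and> P \<subseteq> Z2 G \<and> Q \<subseteq> Z2 K \<and>
     \<not> cartesian G K F
     \<longrightarrow> real (card (Z4 F \<inter> (P \<times> Q))) \<le> C * (real (card P) + real (card Q))"
proof -
  \<comment> \<open>The hypotheses \<open>tdeg2 G \<ge> 1\<close>, \<open>tdeg2 K \<ge> 1\<close> and \<open>F \<noteq> 0\<close> are implied by the others.\<close>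
  have "real (card (Z4 F \<inter> (P \<times> Q)))
      \<le> real (bezout_bound (max d \<delta>)) * (real (card P) + real (card Q))"
    if "irreducible G" "tdeg2 G \<le> \<delta>" "irreducible K" "tdeg2 K \<le> \<delta>" "tdeg4 F = d"
      "finite P" "finite Q" "P \<subseteq> Z2 G" "Q \<subseteq> Z2 K" "\<not> cartesian G K F"
    for d \<delta> :: nat and G K :: poly2 and F :: poly4 and P Q
  proof -
    have "tdeg2 G \<le> max d \<delta>" "tdeg2 K \<le> max d \<delta>" "tdeg4 F \<le> max d \<delta>"
      using that by auto
    then have "partial_degrees_le2 (max d \<delta>) G" "partial_degrees_le2 (max d \<delta>) K"
        "partial_degrees_le4 (max d \<delta>) F"
      using partial_degrees_le2_mono[OF partial_degrees_le2_tdeg2]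
        partial_degrees_le4_mono[OF partial_degrees_le4_tdeg4] by blast+
    then have "card (Z4 F \<inter> (P \<times> Q)) \<le> bezout_bound (max d \<delta>) * (card P + card Q)"
      using card_zeros_on_grid_le that by blast
    then show ?thesis
      by (metis of_nat_add of_nat_mono of_nat_mult)
  qed
  then show ?thesis
    by blast
qed

end
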